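(* Let $V=\bigoplus_{i\in\mathbb N}\mathbb R$ (finitely supported sequences, coordinatewise addition) and $F=\mathbb R$, where $\alpha\in\mathbb R$ acts by $\alpha\cdot(v_i)_i=(\alpha^{2i+1}v_i)_i$. Then $(V,F)$ is a near vector space, but for any non-principal ultrafilter $\mathcal U$ on $\mathbb N$ the ultrapower $\mathcal W=V^{\mathbb N}/\mathcal U$ (as an $\mathcal L_{Fnvs}$-structure) is not a near vector space over $F$: its quasi-kernel does not generate it. Moreover $Q(\mathcal W)\subsetneq \prod Q(V)/\mathcal U$. Consequently the class of near vector spaces over $F$ is not elementary (not axiomatisable by first-order sentences in $\mathcal L_{Fnvs}$).
   Context: An F-group is a pair $(V,F)$ where $(V,+)$ is a group and $F$ is a set of endomorphisms of $V$ such that: the maps $0,1,-1$ lie in $F$; $F\setminus\{0\}$ is a subgroup of $\mathrm{Aut}(V,+)$ under composition; and if $\alpha x=\beta x$ with $\alpha,\beta\in F$, $x\in V$ then $\alpha=\beta$ or $x=0$. The quasi-kernel $Q(V)$ is the set of $u\in V$ such that for all $\alpha,\beta\in F$ there is $\gamma\in F$ with $\alpha u+\beta u=\gamma u$. $(V,F)$ is a near vector space if $Q(V)$ generates $(V,+)$. The language $\mathcal L_{Fnvs}=\{+,0,(\lambda)_{\lambda\in F}\}$ has a unary function symbol for each $\lambda\in F$, interpreted as the action of $\lambda$; ultrapowers are taken in this language, so $F$ acts on $\mathcal W$ coordinatewise. *)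

theory Defs
  imports Complex_Main "HOL-Algebra.Group" "HOL-Algebra.Generated_Groups"
begin

text \<open>An F-group is given by a group G (written additively in the paper) together with
a set S of labels and an action act; the set F of the paper is the set of maps
act a (a in S), maps being compared on the carrier.\<close>

definition same_map :: "('a, 'b) monoid_scheme \<Rightarrow> ('a \<Rightarrow> 'a) \<Rightarrow> ('a \<Rightarrow> 'a) \<Rightarrow> bool" where
  "same_map G f g \<longleftrightarrow> (\<forall>x\<in>carrier G. f x = g x)"

definition F_group :: "('a, 'b) monoid_scheme \<Rightarrow> 's set \<Rightarrow> ('s \<Rightarrow> 'a \<Rightarrow> 'a) \<Rightarrow> bool" where
  "F_group G S act \<longleftrightarrow>
     group G \<and>
     (\<forall>a\<in>S. act a \<in> hom G G) \<and>
     \<comment> \<open>the maps 0, 1, -1 belong to F\<close>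
     (\<exists>a\<in>S. same_map G (act a) (\<lambda>x. \<one>\<^bsub>G\<^esub>)) \<and>
     (\<exists>a\<in>S. same_map G (act a) (\<lambda>x. x)) \<and>
     (\<exists>a\<in>S. same_map G (act a) (\<lambda>x. inv\<^bsub>G\<^esub> x)) \<and>
     \<comment> \<open>F minus the zero map is a subgroup of Aut(G) under composition\<close>
     (\<forall>a\<in>S. \<not> same_map G (act a) (\<lambda>x. \<one>\<^bsub>G\<^esub>) \<longrightarrow> bij_betw (act a) (carrier G) (carrier G)) \<and>
     (\<forall>a\<in>S. \<forall>b\<in>S. \<not> same_map G (act a) (\<lambda>x. \<one>\<^bsub>G\<^esub>) \<longrightarrow> \<not> same_map G (act b) (\<lambda>x. \<one>\<^bsub>G\<^esub>) \<longrightarrow>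
        (\<exists>c\<in>S. same_map G (act c) (act a \<circ> act b))) \<and>
     (\<forall>a\<in>S. \<not> same_map G (act a) (\<lambda>x. \<one>\<^bsub>G\<^esub>) \<longrightarrow>
        (\<exists>c\<in>S. \<forall>x\<in>carrier G. act c (act a x) = x)) \<and>
     \<comment> \<open>fixed-point-freeness\<close>
     (\<forall>a\<in>S. \<forall>b\<in>S. \<forall>x\<in>carrier G. act a x = act b x \<longrightarrow> same_map G (act a) (act b) \<or> x = \<one>\<^bsub>G\<^esub>)"

definition quasi_kernel :: "('a, 'b) monoid_scheme \<Rightarrow> 's set \<Rightarrow> ('s \<Rightarrow> 'a \<Rightarrow> 'a) \<Rightarrow> 'a set" where
  "quasi_kernel G S act =
     {u \<in> carrier G. \<forall>a\<in>S. \<forall>b\<in>S. \<exists>c\<in>S. act a u \<otimes>\<^bsub>G\<^esub> act b u = act c u}"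

definition near_vector_space :: "('a, 'b) monoid_scheme \<Rightarrow> 's set \<Rightarrow> ('s \<Rightarrow> 'a \<Rightarrow> 'a) \<Rightarrow> bool" where
  "near_vector_space G S act \<longleftrightarrow>
     F_group G S act \<and> generate G (quasi_kernel G S act) = carrier G"

definition ultrafilter :: "'i filter \<Rightarrow> bool" where
  "ultrafilter U \<longleftrightarrow> U \<noteq> bot \<and> (\<forall>P. eventually P U \<or> eventually (\<lambda>i. \<not> P i) U)"

definition nonprincipal :: "'i filter \<Rightarrow> bool" where
  "nonprincipal U \<longleftrightarrow> (\<forall>n. \<not> eventually (\<lambda>i. i = n) U)"

definition up_class :: "'i filter \<Rightarrow> ('a, 'b) monoid_scheme \<Rightarrow> ('i \<Rightarrow> 'a) \<Rightarrow> ('i \<Rightarrow> 'a) set" where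
  "up_class U G f = {g. (\<forall>i. g i \<in> carrier G) \<and> eventually (\<lambda>i. g i = f i) U}"

definition ultrapower :: "'i filter \<Rightarrow> ('a, 'b) monoid_scheme \<Rightarrow> ('i \<Rightarrow> 'a) set monoid" where
  "ultrapower U G =
     \<lparr> carrier = {up_class U G f | f. \<forall>i. f i \<in> carrier G},
       mult = (\<lambda>X Y. {h. \<exists>x\<in>X. \<exists>y\<in>Y. h \<in> up_class U G (\<lambda>i. x i \<otimes>\<^bsub>G\<^esub> y i)}),
       one = up_class U G (\<lambda>i. \<one>\<^bsub>G\<^esub>) \<rparr>"

definition up_act :: "'i filter \<Rightarrow> ('a, 'b) monoid_scheme \<Rightarrow> ('s \<Rightarrow> 'a \<Rightarrow> 'a) \<Rightarrow> 's \<Rightarrow> ('i \<Rightarrow> 'a) set \<Rightarrow> ('i \<Rightarrow> 'a) set" where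
  "up_act U G act a X = {h. \<exists>x\<in>X. h \<in> up_class U G (\<lambda>i. act a (x i))}"

definition up_prod :: "'i filter \<Rightarrow> ('a, 'b) monoid_scheme \<Rightarrow> 'a set \<Rightarrow> ('i \<Rightarrow> 'a) set set" where
  "up_prod U G A = {up_class U G f | f. \<forall>i. f i \<in> A}"

definition Vex :: "(nat \<Rightarrow> real) monoid" where
  "Vex = \<lparr> carrier = {v. finite {i. v i \<noteq> 0}}, mult = (\<lambda>v w i. v i + w i), one = (\<lambda>i. 0) \<rparr>"

definition act_ex :: "real \<Rightarrow> (nat \<Rightarrow> real) \<Rightarrow> (nat \<Rightarrow> real)" where
  "act_ex a v = (\<lambda>i. a ^ (2 * i + 1) * v i)"

end

theory Submission
  imports Defs
begin

text \<open>Every vector of V is a finite sum of vectors supported on a single coordinate, and these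
lie in Q(V) because \<open>\<alpha>^(2i+1) + \<beta>^(2i+1)\<close> always has a real \<open>(2i+1)\<close>-st root.
In the ultrapower, applying the quasi-kernel condition with \<open>\<alpha> = \<beta> = 1\<close> to \<open>u \<in> Q(W)\<close> gives
\<open>\<gamma>^(2i+1) = 2\<close> for every coordinate i in the support of almost every component of u; this
equation has at most one solution i, so u is the class of a sequence supported on one fixed
coordinate. Hence the subgroup generated by Q(W) consists of classes of sequences whose supports
lie in a common finite set. The class of the sequence of unit vectors \<open>e\<^sub>n\<close> lies in
\<open>\<Prod>Q(V)/U\<close>, but, U being nonprincipal, not in this subgroup.\<close>

section \<open>Ultrafilters and ultrapowers of groups\<close>

lemma up_class_self: "(\<And>i. f i \<in> carrier G) \<Longrightarrow> f \<in> up_class U G f"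
  by (simp add: up_class_def)

lemma up_class_cong:
  assumes "eventually (\<lambda>i. f i = g i) U"
  shows "up_class U G f = up_class U G g"
proof -
  have "eventually (\<lambda>i. h i = f i) U \<longleftrightarrow> eventually (\<lambda>i. h i = g i) U" for h
    using assms by (intro eventually_subst) (auto elim: eventually_mono)
  then show ?thesis
    unfolding up_class_def by blast
qed

lemma up_class_eq_iff:
  assumes "\<And>i. f i \<in> carrier G"
  shows "up_class U G f = up_class U G g \<longleftrightarrow> eventually (\<lambda>i. f i = g i) U"
  using up_class_self[of f G U, OF assms] up_class_cong[of f g U G]
  by (auto simp: up_class_def)

lemma ultrapower_carrier_iff:
  "X \<in> carrier (ultrapower U G) \<longleftrightarrow> (\<exists>f. (\<forall>i. f i \<in> carrier G) \<and> X = up_class U G f)"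
  by (auto simp: ultrapower_def)

lemma up_class_in_carrier: "(\<And>i. f i \<in> carrier G) \<Longrightarrow> up_class U G f \<in> carrier (ultrapower U G)"
  by (auto simp: ultrapower_carrier_iff)

lemma ultrapower_carrierE:
  assumes "X \<in> carrier (ultrapower U G)"
  obtains f where "\<And>i. f i \<in> carrier G" "X = up_class U G f"
  using assms by (auto simp: ultrapower_carrier_iff)

lemma ultrapower_one: "\<one>\<^bsub>ultrapower U G\<^esub> = up_class U G (\<lambda>i. \<one>\<^bsub>G\<^esub>)"
  by (simp add: ultrapower_def)

lemma ultrapower_mult:
  assumes "\<And>i. f i \<in> carrier G" "\<And>i. g i \<in> carrier G"
  shows "up_class U G f \<otimes>\<^bsub>ultrapower U G\<^esub> up_class U G g = up_class U G (\<lambda>i. f i \<otimes>\<^bsub>G\<^esub> g i)"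
proof -
  have rep: "up_class U G (\<lambda>i. x i \<otimes>\<^bsub>G\<^esub> y i) = up_class U G (\<lambda>i. f i \<otimes>\<^bsub>G\<^esub> g i)"
    if "x \<in> up_class U G f" "y \<in> up_class U G g" for x y
  proof (rule up_class_cong)
    have "eventually (\<lambda>i. x i = f i) U" "eventually (\<lambda>i. y i = g i) U"
      using that by (simp_all add: up_class_def)
    then show "eventually (\<lambda>i. x i \<otimes>\<^bsub>G\<^esub> y i = f i \<otimes>\<^bsub>G\<^esub> g i) U"
      by eventually_elim simp
  qed
  show ?thesis
    unfolding ultrapower_def monoid.simps
    using rep up_class_self[of f, OF assms(1)] up_class_self[of g, OF assms(2)] by blast
qed

lemma up_act_up_class:
  assumes "\<And>i. f i \<in> carrier G"
  shows "up_act U G act a (up_class U G f) = up_class U G (\<lambda>i. act a (f i))"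
proof -
  have rep: "up_class U G (\<lambda>i. act a (x i)) = up_class U G (\<lambda>i. act a (f i))"
    if "x \<in> up_class U G f" for x
  proof (rule up_class_cong)
    have "eventually (\<lambda>i. x i = f i) U"
      using that by (simp add: up_class_def)
    then show "eventually (\<lambda>i. act a (x i) = act a (f i)) U"
      by eventually_elim simp
  qed
  show ?thesis
    unfolding up_act_def using rep up_class_self[of f, OF assms] by blast
qed

lemma group_ultrapower:
  assumes "group G"
  shows "group (ultrapower U G)"
proof -
  interpret G: group G by fact
  let ?W = "ultrapower U G"
  show ?thesis
  proof (rule groupI)
    fix x y z assume "x \<in> carrier ?W" "y \<in> carrier ?W" "z \<in> carrier ?W"
    then obtain f g h where "\<And>i. f i \<in> carrier G" "\<And>i. g i \<in> carrier G" "\<And>i. h i \<in> carrier G"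
      and "x = up_class U G f" "y = up_class U G g" "z = up_class U G h"
      by (meson ultrapower_carrierE)
    then show "x \<otimes>\<^bsub>?W\<^esub> y \<otimes>\<^bsub>?W\<^esub> z = x \<otimes>\<^bsub>?W\<^esub> (y \<otimes>\<^bsub>?W\<^esub> z)"
      by (simp add: ultrapower_mult G.m_assoc)
  next
    fix x y assume "x \<in> carrier ?W" "y \<in> carrier ?W"
    then obtain f g where "\<And>i. f i \<in> carrier G" "\<And>i. g i \<in> carrier G"
      and "x = up_class U G f" "y = up_class U G g"
      by (meson ultrapower_carrierE)
    then show "x \<otimes>\<^bsub>?W\<^esub> y \<in> carrier ?W"
      by (simp add: ultrapower_mult up_class_in_carrier)
  next
    show "\<one>\<^bsub>?W\<^esub> \<in> carrier ?W"
      by (simp add: ultrapower_one up_class_in_carrier)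
  next
    fix x assume "x \<in> carrier ?W"
    then obtain f where f: "\<And>i. f i \<in> carrier G" and x: "x = up_class U G f"
      by (meson ultrapower_carrierE)
    show "\<one>\<^bsub>?W\<^esub> \<otimes>\<^bsub>?W\<^esub> x = x"
      by (simp add: x f ultrapower_one ultrapower_mult)
    have "up_class U G (\<lambda>i. inv\<^bsub>G\<^esub> f i) \<otimes>\<^bsub>?W\<^esub> x = \<one>\<^bsub>?W\<^esub>"
      by (simp add: x f ultrapower_one ultrapower_mult)
    moreover have "up_class U G (\<lambda>i. inv\<^bsub>G\<^esub> f i) \<in> carrier ?W"
      by (simp add: f up_class_in_carrier)
    ultimately show "\<exists>y\<in>carrier ?W. y \<otimes>\<^bsub>?W\<^esub> x = \<one>\<^bsub>?W\<^esub>"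
      by blast
  qed
qed

lemma ultrapower_inv:
  assumes "group G" "\<And>i. f i \<in> carrier G"
  shows "inv\<^bsub>ultrapower U G\<^esub> up_class U G f = up_class U G (\<lambda>i. inv\<^bsub>G\<^esub> f i)"
proof -
  interpret G: group G by fact
  interpret W: group "ultrapower U G" using assms(1) by (rule group_ultrapower)
  show ?thesis
    by (rule W.inv_equality)
      (simp_all add: assms(2) ultrapower_one ultrapower_mult up_class_in_carrier)
qed

lemma ultrafilter_nonprincipal_not_eventually_finite:
  assumes "ultrafilter U" "nonprincipal U" "finite K"
  shows "\<not> eventually (\<lambda>i. i \<in> K) U"
  using assms(3)
proof (induction K rule: finite_induct)
  case empty
  then show ?case using assms(1) by (simp add: ultrafilter_def)
next
  case (insert k K)
  have "eventually (\<lambda>i. i \<noteq> k) U"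
    using assms unfolding ultrafilter_def nonprincipal_def by blast
  show ?case
  proof
    assume "eventually (\<lambda>i. i \<in> insert k K) U"
    with \<open>eventually (\<lambda>i. i \<noteq> k) U\<close> have "eventually (\<lambda>i. i \<in> K) U"
      by eventually_elim simp
    with insert.IH show False ..
  qed
qed

section \<open>The vector space V and its scalar action\<close>

lemma Vex_carrier_iff: "v \<in> carrier Vex \<longleftrightarrow> finite {i. v i \<noteq> 0}"
  by (simp add: Vex_def)

lemma Vex_mult: "v \<otimes>\<^bsub>Vex\<^esub> w = (\<lambda>i. v i + w i)"
  by (simp add: Vex_def)

lemma Vex_one: "\<one>\<^bsub>Vex\<^esub> = (\<lambda>i. 0)"
  by (simp add: Vex_def)

lemma Vex_carrierI:
  assumes "finite K" "\<And>i. i \<notin> K \<Longrightarrow> v i = 0"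
  shows "v \<in> carrier Vex"
  unfolding Vex_carrier_iff using assms by (metis (mono_tags) mem_Collect_eq finite_subset subsetI)

lemma Vex_add_closed:
  assumes "v \<in> carrier Vex" "w \<in> carrier Vex"
  shows "(\<lambda>i. v i + w i) \<in> carrier Vex"
proof -
  have "{i. v i + w i \<noteq> 0} \<subseteq> {i. v i \<noteq> 0} \<union> {i. w i \<noteq> 0}" by auto
  then show ?thesis using assms unfolding Vex_carrier_iff by (meson finite_Un finite_subset)
qed

lemma Vex_uminus_closed: "v \<in> carrier Vex \<Longrightarrow> (\<lambda>i. - v i) \<in> carrier Vex"
  by (simp add: Vex_carrier_iff)

lemma group_Vex: "group Vex"
proof (rule groupI)
  show "x \<otimes>\<^bsub>Vex\<^esub> y \<in> carrier Vex" if "x \<in> carrier Vex" "y \<in> carrier Vex" for x y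
    using Vex_add_closed[OF that] by (simp add: Vex_mult)
  show "\<exists>y\<in>carrier Vex. y \<otimes>\<^bsub>Vex\<^esub> x = \<one>\<^bsub>Vex\<^esub>" if "x \<in> carrier Vex" for x
    using Vex_uminus_closed[OF that] by (intro bexI[of _ "\<lambda>i. - x i"]) (auto simp: Vex_mult Vex_one)
qed (simp_all add: Vex_mult Vex_one Vex_carrier_iff add.assoc)

lemma Vex_inv: "v \<in> carrier Vex \<Longrightarrow> inv\<^bsub>Vex\<^esub> v = (\<lambda>i. - v i)"
  by (rule group.inv_equality[OF group_Vex]) (simp_all add: Vex_mult Vex_one Vex_uminus_closed)

definition unit_vec :: "nat \<Rightarrow> nat \<Rightarrow> real" where
  "unit_vec n i = (if i = n then 1 else 0)"

lemma unit_vec_carrier: "unit_vec n \<in> carrier Vex"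
  by (rule Vex_carrierI[of "{n}"]) (simp_all add: unit_vec_def)

lemma act_ex_closed: "v \<in> carrier Vex \<Longrightarrow> act_ex a v \<in> carrier Vex"
  by (rule Vex_carrierI[of "{i. v i \<noteq> 0}"]) (simp_all add: Vex_carrier_iff act_ex_def)

lemma act_ex_hom: "act_ex a \<in> hom Vex Vex"
  unfolding hom_def using act_ex_closed by (auto simp: Vex_mult act_ex_def distrib_left)

lemma act_ex_act_ex: "act_ex a (act_ex b v) = act_ex (a * b) v"
  by (simp add: act_ex_def power_mult_distrib mult_ac)

lemma act_ex_1: "act_ex 1 v = v"
  by (simp add: act_ex_def)

lemma same_map_act_ex_zero_iff: "same_map Vex (act_ex a) (\<lambda>x. \<one>\<^bsub>Vex\<^esub>) \<longleftrightarrow> a = 0"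
proof
  assume "same_map Vex (act_ex a) (\<lambda>x. \<one>\<^bsub>Vex\<^esub>)"
  then have "act_ex a (unit_vec 0) 0 = 0"
    unfolding same_map_def Vex_one using unit_vec_carrier by metis
  then show "a = 0" by (simp add: act_ex_def unit_vec_def)
qed (simp add: same_map_def act_ex_def Vex_one)

lemma bij_betw_act_ex:
  assumes "a \<noteq> 0"
  shows "bij_betw (act_ex a) (carrier Vex) (carrier Vex)"
  by (rule bij_betw_byWitness[where f' = "act_ex (inverse a)"])
    (use assms act_ex_closed in \<open>auto simp: act_ex_act_ex act_ex_1\<close>)

lemma act_ex_eq_imp_eq:
  assumes "act_ex a v = act_ex b v" "v \<noteq> (\<lambda>i. 0)"
  shows "a = b"
proof -
  obtain i where i: "v i \<noteq> 0" using assms(2) by auto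
  have "a ^ (2 * i + 1) * v i = b ^ (2 * i + 1) * v i"
    using fun_cong[OF assms(1), of i] by (simp add: act_ex_def)
  then have "a ^ (2 * i + 1) = b ^ (2 * i + 1)" using i by simp
  moreover have "odd (2 * i + 1)" by simp
  ultimately show "a = b" by (metis odd_real_root_power_cancel)
qed

lemma F_group_Vex: "F_group Vex UNIV act_ex"
  unfolding F_group_def
proof (intro conjI ballI impI)
  show "\<exists>a\<in>UNIV. same_map Vex (act_ex a) (\<lambda>x. \<one>\<^bsub>Vex\<^esub>)"
    using same_map_act_ex_zero_iff by blast
  show "\<exists>a\<in>UNIV. same_map Vex (act_ex a) (\<lambda>x. x)"
    by (rule bexI[of _ 1]) (simp_all add: same_map_def act_ex_1)
  show "\<exists>a\<in>UNIV. same_map Vex (act_ex a) (\<lambda>x. inv\<^bsub>Vex\<^esub> x)"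
    by (rule bexI[of _ "-1"]) (simp_all add: same_map_def Vex_inv act_ex_def)
  fix a b :: real
  show "\<exists>c\<in>UNIV. same_map Vex (act_ex c) (act_ex a \<circ> act_ex b)"
    by (auto simp: same_map_def act_ex_act_ex)
  assume "\<not> same_map Vex (act_ex a) (\<lambda>x. \<one>\<^bsub>Vex\<^esub>)"
  then have "a \<noteq> 0" by (simp add: same_map_act_ex_zero_iff)
  then show "bij_betw (act_ex a) (carrier Vex) (carrier Vex)"
    by (rule bij_betw_act_ex)
  show "\<exists>c\<in>UNIV. \<forall>x\<in>carrier Vex. act_ex c (act_ex a x) = x"
    using \<open>a \<noteq> 0\<close> by (intro bexI[of _ "inverse a"]) (simp_all add: act_ex_act_ex act_ex_1)
qed (auto simp: group_Vex act_ex_hom same_map_def Vex_one dest: act_ex_eq_imp_eq)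

lemma quasi_kernel_Vex_single_support:
  assumes "\<And>i. i \<noteq> k \<Longrightarrow> v i = 0"
  shows "v \<in> quasi_kernel Vex UNIV act_ex"
proof -
  have "act_ex a v \<otimes>\<^bsub>Vex\<^esub> act_ex b v = act_ex c v"
    if c: "c ^ (2 * k + 1) = a ^ (2 * k + 1) + b ^ (2 * k + 1)" for a b c
  proof
    fix i
    show "(act_ex a v \<otimes>\<^bsub>Vex\<^esub> act_ex b v) i = act_ex c v i"
      using assms c by (cases "i = k") (auto simp: Vex_mult act_ex_def distrib_right)
  qed
  moreover have "root (2 * k + 1) x ^ (2 * k + 1) = x" for x
    by (rule odd_real_root_pow) simp
  moreover have "v \<in> carrier Vex"
    by (rule Vex_carrierI[of "{k}"]) (simp_all add: assms)
  ultimately show ?thesis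
    unfolding quasi_kernel_def by blast
qed

lemma generate_quasi_kernel_Vex: "generate Vex (quasi_kernel Vex UNIV act_ex) = carrier Vex"
proof
  let ?gen = "generate Vex (quasi_kernel Vex UNIV act_ex)"
  show "?gen \<subseteq> carrier Vex"
    by (rule group.generate_incl[OF group_Vex]) (auto simp: quasi_kernel_def)
  have finite_support: "v \<in> ?gen" if "finite K" "\<And>i. i \<notin> K \<Longrightarrow> v i = 0" for K v
    using that
  proof (induction K arbitrary: v rule: finite_induct)
    case empty
    then have "v = \<one>\<^bsub>Vex\<^esub>" by (auto simp: Vex_one)
    then show ?case by (simp add: generate.one)
  next
    case (insert k K)
    let ?single = "\<lambda>i. if i = k then v k else 0"
    have "v(k := 0) \<in> ?gen"
      using insert.prems by (intro insert.IH) simp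
    moreover have "?single \<in> ?gen"
      by (intro generate.incl quasi_kernel_Vex_single_support[of k]) simp
    moreover have "v = v(k := 0) \<otimes>\<^bsub>Vex\<^esub> ?single"
      by (auto simp: Vex_mult)
    ultimately show ?case
      by (metis generate.eng)
  qed
  show "carrier Vex \<subseteq> ?gen"
  proof
    fix v assume "v \<in> carrier Vex"
    then show "v \<in> ?gen"
      by (intro finite_support[of "{i. v i \<noteq> 0}"]) (simp_all add: Vex_carrier_iff)
  qed
qed

lemma near_vector_space_Vex: "near_vector_space Vex UNIV act_ex"
  unfolding near_vector_space_def using F_group_Vex generate_quasi_kernel_Vex by blast

section \<open>The quasi-kernel of the ultrapower\<close>

lemma odd_power_eq_two_unique:
  obtains k where "\<And>i. (c::real) ^ (2 * i + 1) = 2 \<Longrightarrow> i = k"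
proof (cases "\<exists>j. c ^ (2 * j + 1) = 2")
  case True
  then obtain j where j: "c ^ (2 * j + 1) = 2" by blast
  have "0 < c"
    using j zero_less_power_eq[of c "2 * j + 1"] by simp
  moreover have "c \<noteq> 1"
    using j by auto
  ultimately have "i = j" if "c ^ (2 * i + 1) = 2" for i
  proof -
    have "c ^ (2 * i + 1) = c ^ (2 * j + 1)"
      using that j by (simp only:)
    then have "2 * i + 1 = 2 * j + 1"
      by (simp only: power_inject_exp'[OF \<open>c \<noteq> 1\<close> \<open>0 < c\<close>])
    then show "i = j" by simp
  qed
  then show thesis by (rule that)
qed (use that in blast)

lemma double_eq_act_ex_imp_power_eq_two:
  assumes "(\<lambda>i. v i + v i) = act_ex c v" "v i \<noteq> 0"
  shows "c ^ (2 * i + 1) = 2"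
proof -
  have "2 * v i = c ^ (2 * i + 1) * v i"
    using fun_cong[OF assms(1), of i] by (simp add: act_ex_def)
  then show ?thesis
    using assms(2) by simp
qed

lemma quasi_kernel_ultrapower_single_support:
  assumes "X \<in> quasi_kernel (ultrapower U Vex) UNIV (up_act U Vex act_ex)"
  obtains f k where "X = up_class U Vex f" "\<And>n i. i \<noteq> k \<Longrightarrow> f n i = 0"
proof -
  have "X \<in> carrier (ultrapower U Vex)"
    using assms by (simp add: quasi_kernel_def)
  then obtain g where g: "\<And>n. g n \<in> carrier Vex" and X: "X = up_class U Vex g"
    by (meson ultrapower_carrierE)
  obtain c where "up_act U Vex act_ex 1 X \<otimes>\<^bsub>ultrapower U Vex\<^esub> up_act U Vex act_ex 1 X
      = up_act U Vex act_ex c X"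
    using assms unfolding quasi_kernel_def by blast
  then have "up_class U Vex (\<lambda>n i. g n i + g n i) = up_class U Vex (\<lambda>n. act_ex c (g n))"
    by (simp add: X g act_ex_1 up_act_up_class ultrapower_mult Vex_mult)
  moreover have sum_carrier: "(\<lambda>i. g n i + g n i) \<in> carrier Vex" for n
    using g g by (rule Vex_add_closed)
  ultimately have "eventually (\<lambda>n. (\<lambda>i. g n i + g n i) = act_ex c (g n)) U"
    by (simp only: up_class_eq_iff[OF sum_carrier])
  moreover obtain k where k: "\<And>i. c ^ (2 * i + 1) = 2 \<Longrightarrow> i = k"
    using odd_power_eq_two_unique[of c] by meson
  ultimately have supp: "eventually (\<lambda>n. \<forall>i. i \<noteq> k \<longrightarrow> g n i = 0) U"
    by (elim eventually_mono) (use double_eq_act_ex_imp_power_eq_two in blast)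
  define f where "f n = (if \<forall>i. i \<noteq> k \<longrightarrow> g n i = 0 then g n else (\<lambda>i. 0))" for n
  have "X = up_class U Vex f"
    unfolding X using supp by (intro up_class_cong) (auto simp: f_def elim: eventually_mono)
  moreover have "\<And>n i. i \<noteq> k \<Longrightarrow> f n i = 0"
    by (simp add: f_def)
  ultimately show thesis
    using that by blast
qed

lemma quasi_kernel_ultrapower_subset_up_prod:
  "quasi_kernel (ultrapower U Vex) UNIV (up_act U Vex act_ex)
     \<subseteq> up_prod U Vex (quasi_kernel Vex UNIV act_ex)"
proof
  fix X assume "X \<in> quasi_kernel (ultrapower U Vex) UNIV (up_act U Vex act_ex)"
  then obtain f k where "X = up_class U Vex f" "\<And>n i. i \<noteq> k \<Longrightarrow> f n i = 0"
    by (meson quasi_kernel_ultrapower_single_support)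
  then show "X \<in> up_prod U Vex (quasi_kernel Vex UNIV act_ex)"
    unfolding up_prod_def using quasi_kernel_Vex_single_support by blast
qed

section \<open>The subgroup generated by the quasi-kernel of the ultrapower\<close>

definition bounded_support_classes :: "'i filter \<Rightarrow> ('i \<Rightarrow> nat \<Rightarrow> real) set set" where
  "bounded_support_classes U =
     {up_class U Vex f | f K. finite K \<and> (\<forall>n i. i \<notin> K \<longrightarrow> f n i = 0)}"

lemma bounded_support_classesI:
  "finite K \<Longrightarrow> (\<And>n i. i \<notin> K \<Longrightarrow> f n i = 0) \<Longrightarrow> up_class U Vex f \<in> bounded_support_classes U"
  unfolding bounded_support_classes_def by blast

lemma bounded_support_classesE:
  assumes "X \<in> bounded_support_classes U"
  obtains f K where "finite K" "\<And>n i. i \<notin> K \<Longrightarrow> f n i = 0" "\<And>n. f n \<in> carrier Vex"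
    "X = up_class U Vex f"
proof -
  obtain f K where "finite K" "\<And>n i. i \<notin> K \<Longrightarrow> f n i = 0" "X = up_class U Vex f"
    using assms unfolding bounded_support_classes_def by blast
  moreover from this have "\<And>n. f n \<in> carrier Vex"
    by (blast intro: Vex_carrierI)
  ultimately show thesis
    using that by blast
qed

lemma subgroup_bounded_support_classes:
  "subgroup (bounded_support_classes U) (ultrapower U Vex)"
proof (rule group.subgroupI[OF group_ultrapower[OF group_Vex]])
  show "bounded_support_classes U \<subseteq> carrier (ultrapower U Vex)"
    by (auto elim!: bounded_support_classesE intro: up_class_in_carrier)
  show "bounded_support_classes U \<noteq> {}"
    using bounded_support_classesI[of "{}" "\<lambda>n i. 0" U] by blast
next
  fix X assume "X \<in> bounded_support_classes U"
  then obtain f K where K: "finite K" "\<And>n i. i \<notin> K \<Longrightarrow> f n i = 0"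
    and f: "\<And>n. f n \<in> carrier Vex" and X: "X = up_class U Vex f"
    by (meson bounded_support_classesE)
  have "up_class U Vex (\<lambda>n i. - f n i) \<in> bounded_support_classes U"
    using K by (intro bounded_support_classesI[of K]) simp_all
  then show "inv\<^bsub>ultrapower U Vex\<^esub> X \<in> bounded_support_classes U"
    by (simp add: X f ultrapower_inv group_Vex Vex_inv)
next
  fix X Y assume "X \<in> bounded_support_classes U" "Y \<in> bounded_support_classes U"
  obtain f K where K: "finite K" "\<And>n i. i \<notin> K \<Longrightarrow> f n i = 0"
    and f: "\<And>n. f n \<in> carrier Vex" and X: "X = up_class U Vex f"
    using \<open>X \<in> _\<close> by (meson bounded_support_classesE)
  obtain g L where L: "finite L" "\<And>n i. i \<notin> L \<Longrightarrow> g n i = 0"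
    and g: "\<And>n. g n \<in> carrier Vex" and Y: "Y = up_class U Vex g"
    using \<open>Y \<in> _\<close> by (meson bounded_support_classesE)
  have "up_class U Vex (\<lambda>n i. f n i + g n i) \<in> bounded_support_classes U"
    using K L by (intro bounded_support_classesI[of "K \<union> L"]) simp_all
  then show "X \<otimes>\<^bsub>ultrapower U Vex\<^esub> Y \<in> bounded_support_classes U"
    by (simp add: X Y f g ultrapower_mult Vex_mult)
qed

lemma generate_quasi_kernel_ultrapower_subset:
  "generate (ultrapower U Vex) (quasi_kernel (ultrapower U Vex) UNIV (up_act U Vex act_ex))
     \<subseteq> bounded_support_classes U"
proof (rule group.generate_subgroup_incl[OF group_ultrapower[OF group_Vex] _
      subgroup_bounded_support_classes])
  show "quasi_kernel (ultrapower U Vex) UNIV (up_act U Vex act_ex) \<subseteq> bounded_support_classes U"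
  proof
    fix X assume "X \<in> quasi_kernel (ultrapower U Vex) UNIV (up_act U Vex act_ex)"
    then obtain f k where "X = up_class U Vex f" "\<And>n i. i \<noteq> k \<Longrightarrow> f n i = 0"
      by (meson quasi_kernel_ultrapower_single_support)
    then show "X \<in> bounded_support_classes U"
      using bounded_support_classesI[of "{k}" f U] by simp
  qed
qed

lemma up_class_unit_vec_in_up_prod: "up_class U Vex unit_vec \<in> up_prod U Vex (quasi_kernel Vex UNIV act_ex)"
  unfolding up_prod_def using quasi_kernel_Vex_single_support[of _ "unit_vec _"]
  by (auto simp: unit_vec_def)

lemma up_class_unit_vec_not_bounded_support:
  assumes "ultrafilter U" "nonprincipal U"
  shows "up_class U Vex unit_vec \<notin> bounded_support_classes U"
proof
  assume "up_class U Vex unit_vec \<in> bounded_support_classes U"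
  then obtain f K where K: "finite K" "\<And>n i. i \<notin> K \<Longrightarrow> f n i = 0"
    and eq: "up_class U Vex unit_vec = up_class U Vex f"
    by (meson bounded_support_classesE)
  have "eventually (\<lambda>n. unit_vec n = f n) U"
    using eq by (simp only: up_class_eq_iff[OF unit_vec_carrier])
  then have "eventually (\<lambda>n. n \<in> K) U"
  proof eventually_elim
    case (elim n)
    then have "f n n = unit_vec n n" by simp
    then have "f n n = 1" by (simp add: unit_vec_def)
    then show "n \<in> K" using K(2) by force
  qed
  with ultrafilter_nonprincipal_not_eventually_finite[OF assms K(1)] show False ..
qed

theorem mainTheorem12:
  shows "near_vector_space Vex (UNIV :: real set) act_ex \<and>
    (\<forall>U :: nat filter. ultrafilter U \<and> nonprincipal U \<longrightarrow>
       \<not> near_vector_space (ultrapower U Vex) (UNIV :: real set) (up_act U Vex act_ex) \<and>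
       generate (ultrapower U Vex) (quasi_kernel (ultrapower U Vex) UNIV (up_act U Vex act_ex))
         \<noteq> carrier (ultrapower U Vex) \<and>
       quasi_kernel (ultrapower U Vex) UNIV (up_act U Vex act_ex)
         \<subset> up_prod U Vex (quasi_kernel Vex UNIV act_ex))"
proof (intro conjI allI impI)
  show "near_vector_space Vex UNIV act_ex"
    by (rule near_vector_space_Vex)
  fix U :: "nat filter" assume U: "ultrafilter U \<and> nonprincipal U"
  let ?W = "ultrapower U Vex" and ?e = "up_class U Vex unit_vec"
  let ?Q = "quasi_kernel ?W UNIV (up_act U Vex act_ex)"
  have "?e \<notin> bounded_support_classes U"
    using U by (simp add: up_class_unit_vec_not_bounded_support)
  with generate_quasi_kernel_ultrapower_subset have e_not_generated: "?e \<notin> generate ?W ?Q"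
    by (rule contra_subsetD)
  moreover have "?e \<in> carrier ?W"
    by (intro up_class_in_carrier unit_vec_carrier)
  ultimately show "generate ?W ?Q \<noteq> carrier ?W"
    by blast
  then show "\<not> near_vector_space ?W UNIV (up_act U Vex act_ex)"
    by (simp add: near_vector_space_def)
  have "?e \<notin> ?Q"
    using e_not_generated by (auto intro: generate.incl)
  then show "?Q \<subset> up_prod U Vex (quasi_kernel Vex UNIV act_ex)"
    using quasi_kernel_ultrapower_subset_up_prod up_class_unit_vec_in_up_prod
    by (intro psubsetI) auto
qed

end
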